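(* Let $d\ge 1$ and let $\mathcal P=\{P^j\}_{j=1}^d$, where each $P^j=\{p^j_i\}_{i=1}^\infty$ is a sequence of natural numbers different from $1$, and assume $$\sup_{i\in\mathbb N,\,1\le j\le d}p^j_i<\infty .$$ Let $\Psi$ be a complex-valued additive function on the $\mathcal P$-ary parallelepipeds $\Lambda^d$, fix $I_0\in\Lambda^d$, and let $h_m:I_0\to\mathbb R$ ($m\in\mathbb N$) be measurable functions satisfying: (i) $0\le h_1(x)\le h_2(x)\le\dots\le h_m(x)\le\dots$ and $\lim_{m\to\infty}h_m(x)=\infty$; (ii) there is a constant $C>0$ such that for every $m\in\mathbb N$ there are parallelepipeds $I^m_1,\dots,I^m_{n_m}\in\Lambda^d$ with pairwise disjoint interiors and $\bigcup_{k=1}^{n_m}I^m_k=I_0$, satisfying $\sup_{x\in I^m_k}h_m(x)\le C\inf_{x\in I^m_k}h_m(x)$ for all $m\in\mathbb N$, $1\le k\le n_m$; (iii) $\inf_{m,k}\int_{I^m_k}h_m(x)\,dx>0$. Suppose that $$\lim_{m\to\infty}\int_{\{x\in I_0:\ \Psi^*(x)>h_m(x)\}}h_m(x)\,dx=0$$ and that $\Psi'(x)$ exists for almost every $x$. Then for every $I\in\Lambda^d$ with $I\subset I_0$, $$\Psi(I)=\lim_{m\to\infty}\int_I\big[\Psi'(x)\big]_{h_m(x)}\,dx .$$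
   Context: Notation: $m^j_0=1$, $m^j_k=\prod_{i=1}^k p^j_i$. $\Lambda^d_k$ is the set of all $\mathcal P$-ary parallelepipeds of rank $k$: $$I=\Big[\tfrac{n_1}{m^1_k},\tfrac{n_1+1}{m^1_k}\Big]\times\dots\times\Big[\tfrac{n_d}{m^d_k},\tfrac{n_d+1}{m^d_k}\Big],\quad n_1,\dots,n_d\in\mathbb Z,$$ and $\Lambda^d=\bigcup_{k\ge0}\Lambda^d_k$. A complex-valued function $\Psi$ on $\Lambda^d$ is additive if $\Psi(I)=\sum_{i=1}^n\Psi(I_i)$ whenever $I,I_1,\dots,I_n\in\Lambda^d$, $I=\bigcup_i I_i$ and the interiors of the $I_i$ are pairwise disjoint. A point $x=(x_1,\dots,x_d)\in\mathbb R^d$ is $\mathcal P$-irrational if for each $j$ and each $n\in\mathbb N$, $x_j\prod_{i=1}^n p^j_i\notin\mathbb Z$. For $\mathcal P$-irrational $x$: $$\Psi'(x)=\lim_{k\to\infty,\ x\in I_k\in\Lambda^d_k}\frac{\Psi(I_k)}{\mu(I_k)},\qquad \Psi^*(x)=\sup_{I:\ x\in I\in\Lambda^d}\frac{|\Psi(I)|}{\mu(I)},$$ where $\mu$ is Lebesgue measure. For a complex function $f$ and nonnegative function $\lambda$, the truncation is $[f(x)]_{\lambda(x)}=f(x)$ if $|f(x)|\le\lambda(x)$ and $0$ if $|f(x)|>\lambda(x)$. *)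

theory Defs
  imports "HOL-Analysis.Analysis"
begin

text \<open>The dimension d is CARD('n) for a finite index type 'n; points of R^d are
  real^'n.  The system P is a function p :: 'n \<Rightarrow> nat \<Rightarrow> nat, where p j i is p^j_i,
  used for i \<ge> 1 only.\<close>

definition mprod :: "('n \<Rightarrow> nat \<Rightarrow> nat) \<Rightarrow> 'n \<Rightarrow> nat \<Rightarrow> nat" where
  "mprod p j k = (\<Prod>i=1..k. p j i)"

definition par :: "('n::finite \<Rightarrow> nat \<Rightarrow> nat) \<Rightarrow> nat \<Rightarrow> ('n \<Rightarrow> int) \<Rightarrow> (real^'n) set" where
  "par p k n = {x. \<forall>j. real_of_int (n j) / real (mprod p j k) \<le> x $ j
                    \<and> x $ j \<le> (real_of_int (n j) + 1) / real (mprod p j k)}"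

definition Lambda_k :: "('n::finite \<Rightarrow> nat \<Rightarrow> nat) \<Rightarrow> nat \<Rightarrow> (real^'n) set set" where
  "Lambda_k p k = range (par p k)"

definition Lambda :: "('n::finite \<Rightarrow> nat \<Rightarrow> nat) \<Rightarrow> (real^'n) set set" where
  "Lambda p = (\<Union>k. Lambda_k p k)"

definition additive_on_Lambda ::
  "('n::finite \<Rightarrow> nat \<Rightarrow> nat) \<Rightarrow> ((real^'n) set \<Rightarrow> complex) \<Rightarrow> bool" where
  "additive_on_Lambda p Psi \<longleftrightarrow>
     (\<forall>I F. I \<in> Lambda p \<and> finite F \<and> F \<subseteq> Lambda p \<and> I = \<Union>F \<and>
        pairwise (\<lambda>A B. interior A \<inter> interior B = {}) F
        \<longrightarrow> Psi I = (\<Sum>J\<in>F. Psi J))"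

definition P_irrational :: "('n::finite \<Rightarrow> nat \<Rightarrow> nat) \<Rightarrow> real^'n \<Rightarrow> bool" where
  "P_irrational p x \<longleftrightarrow> (\<forall>j. \<forall>n\<ge>1. x $ j * real (mprod p j n) \<notin> \<int>)"

abbreviation mu :: "(real^'n::finite) set \<Rightarrow> real" where
  "mu I \<equiv> measure lborel I"

definition has_P_deriv ::
  "('n::finite \<Rightarrow> nat \<Rightarrow> nat) \<Rightarrow> ((real^'n) set \<Rightarrow> complex) \<Rightarrow> real^'n \<Rightarrow> complex \<Rightarrow> bool" where
  "has_P_deriv p Psi x L \<longleftrightarrow> P_irrational p x \<and>
     (\<forall>e>0. \<exists>K. \<forall>k\<ge>K. \<forall>I\<in>Lambda_k p k. x \<in> I \<longrightarrow>
        cmod (Psi I / complex_of_real (mu I) - L) < e)"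

definition P_deriv_exists ::
  "('n::finite \<Rightarrow> nat \<Rightarrow> nat) \<Rightarrow> ((real^'n) set \<Rightarrow> complex) \<Rightarrow> real^'n \<Rightarrow> bool" where
  "P_deriv_exists p Psi x \<longleftrightarrow> (\<exists>L. has_P_deriv p Psi x L)"

definition P_deriv ::
  "('n::finite \<Rightarrow> nat \<Rightarrow> nat) \<Rightarrow> ((real^'n) set \<Rightarrow> complex) \<Rightarrow> real^'n \<Rightarrow> complex" where
  "P_deriv p Psi x = (THE L. has_P_deriv p Psi x L)"

definition P_maximal ::
  "('n::finite \<Rightarrow> nat \<Rightarrow> nat) \<Rightarrow> ((real^'n) set \<Rightarrow> complex) \<Rightarrow> real^'n \<Rightarrow> ereal" where
  "P_maximal p Psi x = (SUP I\<in>{I\<in>Lambda p. x \<in> I}. ereal (cmod (Psi I) / mu I))"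

definition trunc :: "complex \<Rightarrow> real \<Rightarrow> complex" where
  "trunc f l = (if cmod f \<le> l then f else 0)"

end

theory Submission
  imports Defs
begin

text \<open>Fix m and write lam for h m and G for the exceptional set where the maximal function
  exceeds lam. For a cell I \<subseteq> I0 run a stopping time on the P-ary cells below I: a cell
  stops when it lies in a piece of the m-th partition and one of its children lies in G.
  Additivity splits Psi(I) into the integral of the level-k cell averages over the points not yet
  stopped plus the sum of Psi over the first stopped cells. Because the lam-mass of G is small,
  no cell before its first stop lies inside G, so the averages there are bounded by lam at a
  non-exceptional point of the cell; dominated convergence turns them into the P-derivative on the
  never-stopped points, and there the P-derivative differs from its truncation only on G and by
  at most C lam. A first stopped cell is controlled, via the ratio condition and the bound on the
  p j i, by the lam-mass of its exceptional child, and these children are disjoint parts of G.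
  Altogether the error is at most a constant times the lam-mass of G, which tends to 0.\<close>

section \<open>P-ary cells\<close>

lemma zdiv_eq_iff_bounds:
  fixes a b q :: int
  assumes "0 < q"
  shows "a div q = b \<longleftrightarrow> b * q \<le> a \<and> a < b * q + q"
proof
  assume "a div q = b"
  then have "b * q + a mod q = a" using mult_div_mod_eq[of q a] by (simp add: mult.commute)
  with pos_mod_bound[OF assms, of a] pos_mod_sign[OF assms, of a]
  show "b * q \<le> a \<and> a < b * q + q" by linarith
next
  assume "b * q \<le> a \<and> a < b * q + q"
  then show "a div q = b"
    by (intro int_div_pos_eq[where r = "a - b * q"]) (auto simp: algebra_simps)
qed

lemma unit_interval_split:
  fixes y :: real and n q :: int
  assumes "0 < q"
  shows "(real_of_int n \<le> y \<and> y \<le> real_of_int n + 1) \<longleftrightarrow>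
         (\<exists>m. n * q \<le> m \<and> m < n * q + q \<and>
              real_of_int m \<le> y * real_of_int q \<and> y * real_of_int q \<le> real_of_int m + 1)"
proof
  assume y: "real_of_int n \<le> y \<and> y \<le> real_of_int n + 1"
  have "n * q \<le> y * q" "y * q \<le> (n + 1) * q"
    using y assms by (simp_all add: mult_right_mono)
  then have lo: "n * q \<le> \<lfloor>y * q\<rfloor>" and hi: "y * q \<le> real_of_int (n * q + q)"
    by (simp_all add: le_floor_iff distrib_right)
  show "\<exists>m. n * q \<le> m \<and> m < n * q + q \<and>
            real_of_int m \<le> y * real_of_int q \<and> y * real_of_int q \<le> real_of_int m + 1"
  proof (cases "\<lfloor>y * q\<rfloor> < n * q + q")
    case True
    then show ?thesis using lo by (intro exI[of _ "\<lfloor>y * q\<rfloor>"]) linarith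
  next
    case False
    then have "real_of_int (n * q + q) \<le> y * q" by (metis le_floor_iff not_less)
    then show ?thesis using hi assms by (intro exI[of _ "n * q + q - 1"]) auto
  qed
next
  assume "\<exists>m. n * q \<le> m \<and> m < n * q + q \<and>
            real_of_int m \<le> y * real_of_int q \<and> y * real_of_int q \<le> real_of_int m + 1"
  then obtain m where m: "n * q \<le> m" "m + 1 \<le> n * q + q"
    "real_of_int m \<le> y * real_of_int q" "y * real_of_int q \<le> real_of_int m + 1"
    by auto
  from m(1,2) have "real_of_int n * q \<le> m" "real_of_int m + 1 \<le> (real_of_int n + 1) * q"
    by (simp_all add: distrib_right flip: of_int_mult of_int_add of_int_le_iff)
  with m(3,4) have "real_of_int n * q \<le> y * q" "y * q \<le> (real_of_int n + 1) * q"
    by linarith+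
  then show "real_of_int n \<le> y \<and> y \<le> real_of_int n + 1" using assms by simp
qed

lemma sum_eq_single:
  "finite A \<Longrightarrow> a \<in> A \<Longrightarrow> (\<And>b. b \<in> A \<Longrightarrow> b \<noteq> a \<Longrightarrow> f b = 0) \<Longrightarrow> sum f A = f a"
  by (simp add: sum.remove sum.neutral)

definition grid_scale :: "('n \<Rightarrow> nat \<Rightarrow> nat) \<Rightarrow> 'n \<Rightarrow> nat \<Rightarrow> real" where
  "grid_scale p j k = real (mprod p j k)"

definition cell_index :: "('n::finite \<Rightarrow> nat \<Rightarrow> nat) \<Rightarrow> nat \<Rightarrow> real^'n \<Rightarrow> ('n \<Rightarrow> int)" where
  "cell_index p k x = (\<lambda>j. \<lfloor>x $ j * grid_scale p j k\<rfloor>)"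

definition mprod_between :: "('n \<Rightarrow> nat \<Rightarrow> nat) \<Rightarrow> nat \<Rightarrow> nat \<Rightarrow> 'n \<Rightarrow> nat" where
  "mprod_between p r k j = (\<Prod>i\<in>{r<..k}. p j i)"

definition ancestor :: "('n \<Rightarrow> nat \<Rightarrow> nat) \<Rightarrow> nat \<Rightarrow> nat \<Rightarrow> ('n \<Rightarrow> int) \<Rightarrow> ('n \<Rightarrow> int)" where
  "ancestor p r k n = (\<lambda>j. n j div int (mprod_between p r k j))"

definition subcells :: "('n \<Rightarrow> nat \<Rightarrow> nat) \<Rightarrow> nat \<Rightarrow> nat \<Rightarrow> ('n \<Rightarrow> int) \<Rightarrow> ('n \<Rightarrow> int) set" where
  "subcells p r k n = {n'. ancestor p r k n' = n}"

lemma countable_Lambda: "countable (Lambda p)"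
  unfolding Lambda_def Lambda_k_def by (intro countable_UN countable_image) auto

lemma par_in_Lambda: "par p k n \<in> Lambda p"
  unfolding Lambda_def Lambda_k_def by auto

lemma par_in_Lambda_k: "par p k n \<in> Lambda_k p k"
  unfolding Lambda_k_def by auto

lemma Lambda_cases:
  assumes "I \<in> Lambda p"
  obtains k n where "I = par p k n"
  using assms unfolding Lambda_def Lambda_k_def by auto

lemma cell_index_sets_borel: "{x::real^'n::finite. cell_index p k x = n} \<in> sets borel"
proof -
  have "{x::real^'n. cell_index p k x = n} = (\<Inter>j. {x. \<lfloor>x $ j * grid_scale p j k\<rfloor> = n j})"
    unfolding cell_index_def by (auto simp: fun_eq_iff)
  also have "\<dots> \<in> sets borel"
    by (intro sets.countable_INT') auto
  finally show ?thesis .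
qed

lemma cell_index_sets [measurable]: "{x::real^'n::finite. cell_index p k x = n} \<in> sets lebesgue"
  using cell_index_sets_borel[of p k n] by (simp add: sets_completionI_sets)

lemma cell_index_measurable_borel:
  "cell_index p k \<in> borel \<rightarrow>\<^sub>M count_space (UNIV :: ('n::finite \<Rightarrow> int) set)"
  using cell_index_sets_borel[of p k]
  by (intro measurable_count_space_eq2_countable[THEN iffD2]) (auto simp: vimage_def)

lemma cell_index_measurable [measurable]:
  "cell_index p k \<in> lebesgue \<rightarrow>\<^sub>M count_space (UNIV :: ('n::finite \<Rightarrow> int) set)"
  using cell_index_measurable_borel by (intro measurable_completion) simp

locale pary_grid =
  fixes p :: "'n::finite \<Rightarrow> nat \<Rightarrow> nat"
  assumes two_le_p: "\<And>j i. 1 \<le> i \<Longrightarrow> 2 \<le> p j i"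
begin

lemma p_pos: "1 \<le> i \<Longrightarrow> 0 < p j i"
  using two_le_p[of i j] by linarith

lemma grid_scale_pos: "0 < grid_scale p j k"
  unfolding grid_scale_def mprod_def using p_pos by (auto intro!: prod_pos)

lemma mprod_between_pos: "0 < mprod_between p r k j"
  unfolding mprod_between_def using p_pos by (auto intro!: prod_pos)

lemma grid_scale_split:
  assumes "r \<le> k"
  shows "grid_scale p j k = grid_scale p j r * real (mprod_between p r k j)"
proof -
  have "{1..k} = {1..r} \<union> {r<..k}" "{1..r} \<inter> {r<..k} = {}" using assms by auto
  then show ?thesis
    unfolding grid_scale_def mprod_def mprod_between_def by (simp add: prod.union_disjoint)
qed

lemma ancestor_cell_index:
  assumes "r \<le> k"
  shows "ancestor p r k (cell_index p k x) = cell_index p r x"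
proof
  fix j
  have "x $ j * grid_scale p j r = (x $ j * grid_scale p j k) / real_of_int (int (mprod_between p r k j))"
    using grid_scale_split[OF assms, of j] mprod_between_pos[of r k j] by (simp add: field_simps)
  then show "ancestor p r k (cell_index p k x) j = cell_index p r x j"
    unfolding ancestor_def cell_index_def
    using floor_divide_real_eq_div[of "int (mprod_between p r k j)" "x $ j * grid_scale p j k"] by simp
qed

lemma cell_index_in_subcells_iff:
  "r \<le> k \<Longrightarrow> cell_index p k x \<in> subcells p r k n \<longleftrightarrow> cell_index p r x = n"
  unfolding subcells_def by (simp add: ancestor_cell_index)

lemma mem_subcells_iff:
  "n' \<in> subcells p r k n \<longleftrightarrow>
     (\<forall>j. n j * int (mprod_between p r k j) \<le> n' j \<and>
          n' j < n j * int (mprod_between p r k j) + int (mprod_between p r k j))"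
  unfolding subcells_def ancestor_def using mprod_between_pos
  by (simp add: fun_eq_iff zdiv_eq_iff_bounds)

lemma finite_subcells: "finite (subcells p r k n)"
proof (rule finite_subset)
  let ?box = "\<lambda>j. {n j * int (mprod_between p r k j) .. n j * int (mprod_between p r k j) + int (mprod_between p r k j)}"
  show "subcells p r k n \<subseteq> Pi\<^sub>E UNIV ?box"
    by (auto simp: mem_subcells_iff PiE_def extensional_def less_imp_le)
  show "finite (Pi\<^sub>E UNIV ?box)"
    by (intro finite_PiE) auto
qed

lemma subcells_self: "subcells p k k n = {n}"
  unfolding subcells_def ancestor_def mprod_between_def by (auto simp: fun_eq_iff)

lemma mem_par_iff:
  "x \<in> par p k n \<longleftrightarrow>
     (\<forall>j. real_of_int (n j) \<le> x $ j * grid_scale p j k \<and> x $ j * grid_scale p j k \<le> real_of_int (n j) + 1)"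
  unfolding par_def using grid_scale_pos
  by (simp add: grid_scale_def[symmetric] divide_le_eq le_divide_eq)

lemma mem_par_cell_index: "x \<in> par p k (cell_index p k x)"
  unfolding mem_par_iff cell_index_def by simp

lemma par_eq_cbox:
  "par p k n = cbox (\<chi> j. real_of_int (n j) / grid_scale p j k) (\<chi> j. (real_of_int (n j) + 1) / grid_scale p j k)"
  unfolding par_def mem_box_cart(2) set_eq_iff by (simp add: grid_scale_def)

lemma interior_par:
  "interior (par p k n) =
     {x. \<forall>j. real_of_int (n j) < x $ j * grid_scale p j k \<and> x $ j * grid_scale p j k < real_of_int (n j) + 1}"
  unfolding par_eq_cbox interior_cbox mem_box_cart(1) set_eq_iff using grid_scale_pos
  by (simp add: divide_less_eq less_divide_eq)

lemma cell_index_eq_if_mem_interior: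
  "x \<in> interior (par p k n) \<Longrightarrow> cell_index p k x = n"
  unfolding interior_par cell_index_def by (auto simp: fun_eq_iff floor_eq_iff less_imp_le)

lemma interior_par_disjoint: "n \<noteq> n' \<Longrightarrow> interior (par p k n) \<inter> interior (par p k n') = {}"
  using cell_index_eq_if_mem_interior by blast

lemma par_inj: "inj (par p k)"
proof (rule injI)
  fix n n' assume eq: "par p k n = par p k n'"
  define x :: "real^'n" where "x = (\<chi> j. (real_of_int (n j) + 1/2) / grid_scale p j k)"
  have "x \<in> interior (par p k n)"
    unfolding interior_par x_def using grid_scale_pos by (simp add: less_le)
  then show "n = n'"
    using eq cell_index_eq_if_mem_interior by metis
qed

lemma Union_subcells:
  assumes "r \<le> k"
  shows "\<Union>(par p k ` subcells p r k n) = par p r n"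
proof -
  let ?q = "\<lambda>j. int (mprod_between p r k j)"
  let ?y = "\<lambda>x j. x $ j * grid_scale p j r"
  have scale: "x $ j * grid_scale p j k = ?y x j * ?q j" for x j
    using grid_scale_split[OF assms] by simp
  have "x \<in> par p r n \<longleftrightarrow> (\<exists>n'\<in>subcells p r k n. x \<in> par p k n')" for x
  proof -
    have split: "(real_of_int (n j) \<le> ?y x j \<and> ?y x j \<le> real_of_int (n j) + 1) \<longleftrightarrow>
        (\<exists>m. n j * ?q j \<le> m \<and> m < n j * ?q j + ?q j \<and>
             real_of_int m \<le> ?y x j * ?q j \<and> ?y x j * ?q j \<le> real_of_int m + 1)" for j
      by (rule unit_interval_split) (simp add: mprod_between_pos)
    have "x \<in> par p r n \<longleftrightarrow> (\<forall>j. \<exists>m. n j * ?q j \<le> m \<and> m < n j * ?q j + ?q j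
                                  \<and> m \<le> ?y x j * ?q j \<and> ?y x j * ?q j \<le> m + 1)"
      unfolding mem_par_iff split by (rule refl)
    also have "\<dots> \<longleftrightarrow> (\<exists>n'. \<forall>j. n j * ?q j \<le> n' j \<and> n' j < n j * ?q j + ?q j
                                  \<and> n' j \<le> ?y x j * ?q j \<and> ?y x j * ?q j \<le> n' j + 1)"
      by (rule choice_iff)
    also have "\<dots> \<longleftrightarrow> (\<exists>n'\<in>subcells p r k n. x \<in> par p k n')"
      unfolding mem_par_iff mem_subcells_iff scale Bex_def mem_Collect_eq all_conj_distrib
      by (simp only: conj_assoc)
    finally show ?thesis .
  qed
  then show ?thesis by blast
qed

lemma subcell_subset: "r \<le> k \<Longrightarrow> n' \<in> subcells p r k n \<Longrightarrow> par p k n' \<subseteq> par p r n"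
  using Union_subcells[of r k n] by blast

lemma par_cell_index_mono: "r \<le> k \<Longrightarrow> par p k (cell_index p k x) \<subseteq> par p r (cell_index p r x)"
  by (intro subcell_subset) (auto simp: cell_index_in_subcells_iff)

lemma additive_subcells:
  assumes add: "additive_on_Lambda p Psi" and "r \<le> k"
  shows "Psi (par p r n) = (\<Sum>n'\<in>subcells p r k n. Psi (par p k n'))"
proof -
  let ?F = "par p k ` subcells p r k n"
  have "pairwise (\<lambda>A B. interior A \<inter> interior B = {}) ?F"
  proof (clarsimp simp: pairwise_def)
    fix a b assume "par p k a \<noteq> par p k b"
    then show "interior (par p k a) \<inter> interior (par p k b) = {}"
      by (metis interior_par_disjoint)
  qed
  moreover have "par p r n \<in> Lambda p" "finite ?F" "?F \<subseteq> Lambda p" "par p r n = \<Union>?F"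
    using finite_subcells Union_subcells[OF \<open>r \<le> k\<close>] par_in_Lambda by auto
  ultimately have "Psi (par p r n) = (\<Sum>J\<in>?F. Psi J)"
    using add unfolding additive_on_Lambda_def by blast
  also have "\<dots> = (\<Sum>n'\<in>subcells p r k n. Psi (par p k n'))"
    using par_inj by (intro sum.reindex_cong[where l = "par p k"]) (auto simp: inj_on_def inj_def)
  finally show ?thesis .
qed

definition cell_vol :: "nat \<Rightarrow> real" where
  "cell_vol k = (\<Prod>j\<in>UNIV. 1 / grid_scale p j k)"

lemma cell_vol_pos: "0 < cell_vol k"
  unfolding cell_vol_def using grid_scale_pos by (auto intro!: prod_pos)

lemma par_sets [measurable]: "par p k n \<in> sets lebesgue" "par p k n \<in> sets lborel"
  unfolding par_eq_cbox by auto

lemma par_nonempty: "par p k n \<noteq> {}"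
proof -
  have "(\<chi> j. real_of_int (n j) / grid_scale p j k) \<in> par p k n"
    unfolding mem_par_iff using grid_scale_pos by (simp add: less_imp_neq[symmetric])
  then show ?thesis by blast
qed

lemma measure_par: "mu (par p k n) = cell_vol k"
proof -
  have "mu (par p k n) = (\<Prod>j\<in>UNIV. (real_of_int (n j) + 1) / grid_scale p j k - real_of_int (n j) / grid_scale p j k)"
    using par_nonempty[of k n] unfolding par_eq_cbox by (simp add: content_cbox_cart)
  also have "\<dots> = cell_vol k"
    unfolding cell_vol_def by (intro prod.cong) (auto simp: diff_divide_distrib[symmetric])
  finally show ?thesis .
qed

lemma measure_par_lebesgue: "measure lebesgue (par p k n) = cell_vol k"
  using measure_par par_sets(2) by (simp add: measure_completion)

lemma measure_Lambda_pos: "J \<in> Lambda p \<Longrightarrow> 0 < measure lebesgue J"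
  using measure_par_lebesgue cell_vol_pos by (auto elim: Lambda_cases)

lemma emeasure_par_finite: "emeasure lebesgue (par p k n) < \<infinity>"
  using par_sets(2)[of k n] emeasure_bounded_finite[OF bounded_cbox]
  unfolding par_eq_cbox by (simp add: emeasure_completion)

lemma cell_vol_Suc_le:
  assumes "\<And>j i. 1 \<le> i \<Longrightarrow> p j i \<le> B"
  shows "cell_vol k \<le> real B ^ CARD('n) * cell_vol (Suc k)"
proof -
  have "grid_scale p j (Suc k) = grid_scale p j k * real (p j (Suc k))" for j
    unfolding grid_scale_def mprod_def by simp
  then have "cell_vol k = cell_vol (Suc k) * (\<Prod>j\<in>UNIV. real (p j (Suc k)))"
    unfolding cell_vol_def using grid_scale_pos p_pos[of "Suc k"]
    by (simp add: prod.distrib[symmetric] field_simps)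
  also have "\<dots> \<le> cell_vol (Suc k) * (\<Prod>j\<in>(UNIV::'n set). real B)"
    using assms less_imp_le[OF cell_vol_pos] by (intro mult_left_mono prod_mono) auto
  finally show ?thesis by (simp add: mult.commute)
qed

lemma cell_index_eq_if_P_irrational:
  assumes irr: "P_irrational p x" and x: "x \<in> par p k n"
  shows "cell_index p k x = n"
proof -
  have nonint: "x $ j * grid_scale p j k \<notin> \<int>" for j
  proof (cases "k = 0")
    case True
    have "x $ j * real (mprod p j 1) \<notin> \<int>" using irr unfolding P_irrational_def by auto
    then have "x $ j \<notin> \<int>" by (metis Ints_mult Ints_of_nat)
    then show ?thesis using True by (simp add: grid_scale_def mprod_def)
  next
    case False
    then show ?thesis using irr unfolding P_irrational_def grid_scale_def by auto
  qed
  have "real_of_int (n j) < x $ j * grid_scale p j k \<and> x $ j * grid_scale p j k < real_of_int (n j) + 1" for j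
  proof -
    have "x $ j * grid_scale p j k \<noteq> real_of_int (n j)"
      and "x $ j * grid_scale p j k \<noteq> real_of_int (n j) + 1"
      using nonint[of j] Ints_of_int[of "n j"] Ints_of_int[of "n j + 1"] by auto
    then show ?thesis using x unfolding mem_par_iff by (simp add: order.strict_iff_order)
  qed
  then have "x \<in> interior (par p k n)" unfolding interior_par by blast
  then show ?thesis by (rule cell_index_eq_if_mem_interior)
qed

lemma P_irrational_mem_par_iff:
  "P_irrational p x \<Longrightarrow> x \<in> par p k n \<longleftrightarrow> cell_index p k x = n"
  using cell_index_eq_if_P_irrational mem_par_cell_index by blast

end

section \<open>Cell averages and the P-derivative\<close>

context pary_grid
begin

definition cell_avg :: "((real^'n) set \<Rightarrow> complex) \<Rightarrow> nat \<Rightarrow> real^'n \<Rightarrow> complex" where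
  "cell_avg Psi k x = Psi (par p k (cell_index p k x)) / complex_of_real (cell_vol k)"

lemma cell_avg_measurable [measurable]: "cell_avg Psi k \<in> borel_measurable lebesgue"
proof -
  have "cell_avg Psi k \<in> borel_measurable borel"
    unfolding cell_avg_def
    by (rule measurable_compose_countable[where g = "cell_index p k"]) (auto intro: cell_index_measurable_borel)
  then show ?thesis by (intro measurable_completion) simp
qed

lemma has_P_deriv_imp_cell_avg_tendsto:
  assumes "has_P_deriv p Psi x L"
  shows "(\<lambda>k. cell_avg Psi k x) \<longlonglongrightarrow> L"
proof (rule LIMSEQ_I)
  fix e :: real assume "0 < e"
  then obtain K where K: "\<forall>k\<ge>K. \<forall>I\<in>Lambda_k p k. x \<in> I \<longrightarrow> cmod (Psi I / complex_of_real (mu I) - L) < e"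
    using assms unfolding has_P_deriv_def by blast
  show "\<exists>K. \<forall>k\<ge>K. norm (cell_avg Psi k x - L) < e"
  proof (intro exI allI impI)
    fix k assume "K \<le> k"
    then show "norm (cell_avg Psi k x - L) < e"
      using K[rule_format, OF \<open>K \<le> k\<close> par_in_Lambda_k mem_par_cell_index]
      by (simp add: cell_avg_def measure_par)
  qed
qed

lemma Psi_ratio_le_P_maximal:
  "x \<in> par p k n \<Longrightarrow> ereal (cmod (Psi (par p k n)) / cell_vol k) \<le> P_maximal p Psi x"
  unfolding P_maximal_def measure_par[of k n, symmetric] using par_in_Lambda by (intro SUP_upper) auto

lemma cell_avg_le_P_maximal: "ereal (cmod (cell_avg Psi k x)) \<le> P_maximal p Psi x"
  using Psi_ratio_le_P_maximal[OF mem_par_cell_index[of x k], of Psi] cell_vol_pos[of k]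
  by (simp add: cell_avg_def norm_divide)

lemma P_deriv_eqI: "has_P_deriv p Psi x L \<Longrightarrow> P_deriv p Psi x = L"
  unfolding P_deriv_def
  by (rule the_equality) (auto dest!: has_P_deriv_imp_cell_avg_tendsto intro: LIMSEQ_unique)

lemma cell_avg_tendsto_P_deriv:
  "P_deriv_exists p Psi x \<Longrightarrow> (\<lambda>k. cell_avg Psi k x) \<longlonglongrightarrow> P_deriv p Psi x"
  unfolding P_deriv_exists_def using P_deriv_eqI has_P_deriv_imp_cell_avg_tendsto by blast

lemma P_deriv_measurable:
  assumes "AE x in lebesgue. P_deriv_exists p Psi x"
  shows "P_deriv p Psi \<in> borel_measurable lebesgue"
proof (rule borel_measurable_AE)
  show "(\<lambda>x. lim (\<lambda>k. cell_avg Psi k x)) \<in> borel_measurable lebesgue"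
    by (rule borel_measurable_lim_metric) (rule cell_avg_measurable)
  show "AE x in lebesgue. lim (\<lambda>k. cell_avg Psi k x) = P_deriv p Psi x"
    using assms by (rule AE_mp) (auto dest: cell_avg_tendsto_P_deriv limI)
qed

end

locale pary_grid_ae_irr = pary_grid p for p :: "'n::finite \<Rightarrow> nat \<Rightarrow> nat" +
  assumes AE_P_irrational: "AE x in lebesgue. P_irrational p x"
begin

text \<open>Unlike the closed cells, the fibers of cell_index are pairwise disjoint; they differ from
  the cells only by P-rational points, a null set under AE_P_irrational.\<close>

abbreviation fiber :: "nat \<Rightarrow> ('n \<Rightarrow> int) \<Rightarrow> (real^'n) set" where
  "fiber k n \<equiv> {x. cell_index p k x = n}"

lemma fiber_subset_par: "fiber k n \<subseteq> par p k n"
  using mem_par_cell_index by auto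

lemma AE_mem_par_iff_mem_fiber: "AE x in lebesgue. x \<in> par p k n \<longleftrightarrow> x \<in> fiber k n"
  using AE_P_irrational by (rule AE_mp) (auto simp: P_irrational_mem_par_iff)

lemma emeasure_fiber_finite: "emeasure lebesgue (fiber k n) < \<infinity>"
  using emeasure_eq_AE[OF AE_mem_par_iff_mem_fiber] emeasure_par_finite by simp

lemma measure_fiber: "measure lebesgue (fiber k n) = cell_vol k"
  using measure_eq_AE[OF AE_mem_par_iff_mem_fiber] measure_par_lebesgue by simp

lemma integral_indicator_fiber_cong:
  fixes f :: "real^'n \<Rightarrow> 'b::{banach, second_countable_topology}"
  assumes [measurable]: "f \<in> borel_measurable lebesgue"
  shows "integral\<^sup>L lebesgue (\<lambda>x. indicator (fiber k n) x *\<^sub>R f x)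
       = integral\<^sup>L lebesgue (\<lambda>x. indicator (par p k n) x *\<^sub>R f x)"
  using AE_mem_par_iff_mem_fiber[of k n] by (intro integral_cong_AE) (auto elim!: AE_mp simp: indicator_def)

lemma ex_P_irrational_in_fiber: "\<exists>z. P_irrational p z \<and> cell_index p k z = n"
proof (rule ccontr)
  assume "\<not> ?thesis"
  then have "AE x in lebesgue. x \<notin> fiber k n"
    using AE_P_irrational by (rule_tac AE_mp) auto
  then have "emeasure lebesgue (fiber k n) = 0"
    by (subst (asm) AE_iff_measurable[of "fiber k n"]) auto
  then show False using measure_fiber[of k n] cell_vol_pos[of k] by (simp add: measure_def)
qed

lemma indicator_fiber_eq_sum:
  assumes "r \<le> k"
  shows "indicator (fiber r n) x *\<^sub>R (f x :: complex)
       = (\<Sum>n'\<in>subcells p r k n. indicator (fiber k n') x *\<^sub>R f x)"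
proof -
  have "(\<Sum>n'\<in>subcells p r k n. indicator (fiber k n') x *\<^sub>R f x)
      = (\<Sum>n'\<in>subcells p r k n. if cell_index p k x = n' then f x else 0)"
    by (intro sum.cong) (auto simp: indicator_def)
  also have "\<dots> = (if cell_index p k x \<in> subcells p r k n then f x else 0)"
    using finite_subcells by (simp add: sum.delta)
  finally show ?thesis using cell_index_in_subcells_iff[OF assms] by (simp add: indicator_def)
qed

lemma
  assumes add: "additive_on_Lambda p Psi" and "r \<le> k"
  shows integrable_fiber_cell_avg: "integrable lebesgue (\<lambda>x. indicator (fiber r n) x *\<^sub>R cell_avg Psi k x)"
    and integral_fiber_cell_avg: "integral\<^sup>L lebesgue (\<lambda>x. indicator (fiber r n) x *\<^sub>R cell_avg Psi k x) = Psi (par p r n)"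
proof -
  let ?c = "\<lambda>n'. Psi (par p k n') / complex_of_real (cell_vol k)"
  have eq: "(\<lambda>x. indicator (fiber r n) x *\<^sub>R cell_avg Psi k x)
          = (\<lambda>x. \<Sum>n'\<in>subcells p r k n. indicator (fiber k n') x *\<^sub>R ?c n')"
    unfolding indicator_fiber_eq_sum[OF \<open>r \<le> k\<close>]
    by (intro ext sum.cong) (auto simp: indicator_def cell_avg_def)
  have int: "integrable lebesgue (\<lambda>x. indicator (fiber k n') x *\<^sub>R ?c n')" for n'
    using emeasure_fiber_finite by (intro integrable_scaleR_left integrable_real_indicator) auto
  show "integrable lebesgue (\<lambda>x. indicator (fiber r n) x *\<^sub>R cell_avg Psi k x)"
    unfolding eq by (intro Bochner_Integration.integrable_sum int)
  have "integral\<^sup>L lebesgue (\<lambda>x. indicator (fiber r n) x *\<^sub>R cell_avg Psi k x)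
      = (\<Sum>n'\<in>subcells p r k n. cell_vol k *\<^sub>R ?c n')"
    unfolding eq using int emeasure_fiber_finite measure_fiber
    by (subst Bochner_Integration.integral_sum) auto
  also have "\<dots> = (\<Sum>n'\<in>subcells p r k n. Psi (par p k n'))"
    using cell_vol_pos[of k] by (intro sum.cong) (auto simp: scaleR_conv_of_real)
  also have "\<dots> = Psi (par p r n)"
    using additive_subcells[OF add \<open>r \<le> k\<close>] by simp
  finally show "integral\<^sup>L lebesgue (\<lambda>x. indicator (fiber r n) x *\<^sub>R cell_avg Psi k x) = Psi (par p r n)" .
qed

end

section \<open>The stopping-time estimate\<close>

text \<open>One level m of the theorem: lam plays the role of h m and F that of the partition F m.\<close>

locale maximal_setting = pary_grid p for p :: "'n::finite \<Rightarrow> nat \<Rightarrow> nat" +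
  fixes Psi :: "(real^'n) set \<Rightarrow> complex"
    and I0 :: "(real^'n) set" and lam :: "real^'n \<Rightarrow> real"
    and F :: "(real^'n) set set" and C \<delta> :: real
  assumes additive: "additive_on_Lambda p Psi"
    and AE_P_deriv_exists: "AE x in lebesgue. P_deriv_exists p Psi x"
    and I0_in_Lambda: "I0 \<in> Lambda p"
    and lam_measurable [measurable]: "lam \<in> borel_measurable lebesgue"
    and lam_nonneg: "\<And>x. x \<in> I0 \<Longrightarrow> 0 \<le> lam x"
    and finite_F: "finite F" and F_subset_Lambda: "F \<subseteq> Lambda p" and Union_F: "\<Union>F = I0"
    and lam_ratio: "\<And>K x y. K \<in> F \<Longrightarrow> x \<in> K \<Longrightarrow> y \<in> K \<Longrightarrow> lam x \<le> C * lam y"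
    and C_pos: "0 < C"
    and delta_le_mass: "\<And>K. K \<in> F \<Longrightarrow> \<delta> \<le> integral\<^sup>L lebesgue (\<lambda>x. indicator K x * lam x)"
begin

sublocale pary_grid_ae_irr
  using AE_P_deriv_exists
  by unfold_locales (auto elim!: AE_mp simp: P_deriv_exists_def has_P_deriv_def)

abbreviation mass :: "(real^'n) set \<Rightarrow> real" where
  "mass A \<equiv> integral\<^sup>L lebesgue (\<lambda>x. indicator A x * lam x)"

definition exceptional :: "(real^'n) set" where
  "exceptional = {x\<in>I0. ereal (lam x) < P_maximal p Psi x}"

definition trunc_deriv :: "real^'n \<Rightarrow> complex" where
  "trunc_deriv x = trunc (P_deriv p Psi x) (lam x)"

lemma I0_sets [measurable]: "I0 \<in> sets lebesgue"
  using I0_in_Lambda by (auto elim: Lambda_cases)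

lemma emeasure_I0_finite: "emeasure lebesgue I0 < \<infinity>"
  using I0_in_Lambda emeasure_par_finite by (auto elim: Lambda_cases)

lemma measure_I0_pos: "0 < measure lebesgue I0"
  using I0_in_Lambda by (rule measure_Lambda_pos)

lemma F_cases:
  assumes "K \<in> F"
  obtains k n where "K = par p k n"
  using assms F_subset_Lambda by (meson Lambda_cases subsetD)

lemma lam_bounded: obtains \<Lambda> where "0 \<le> \<Lambda>" "\<And>x. x \<in> I0 \<Longrightarrow> lam x \<le> \<Lambda>"
proof
  define y where "y K = (SOME y. y \<in> K)" for K :: "(real^'n) set"
  have y: "y K \<in> K" if "K \<in> F" for K
    using that unfolding y_def by (metis F_cases par_nonempty some_in_eq)
  show "0 \<le> C * (\<Sum>K\<in>F. \<bar>lam (y K)\<bar>)"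
    using C_pos by (simp add: sum_nonneg)
  fix x assume "x \<in> I0"
  then obtain K where K: "K \<in> F" "x \<in> K" using Union_F by auto
  have "lam x \<le> C * \<bar>lam (y K)\<bar>"
    using lam_ratio[OF K y[OF K(1)]] C_pos by (smt (verit) mult_left_mono abs_ge_self)
  also have "\<dots> \<le> C * (\<Sum>K\<in>F. \<bar>lam (y K)\<bar>)"
    using C_pos K finite_F by (intro mult_left_mono member_le_sum) auto
  finally show "lam x \<le> C * (\<Sum>K\<in>F. \<bar>lam (y K)\<bar>)" .
qed

lemma integrable_mass:
  assumes "A \<in> sets lebesgue" "A \<subseteq> I0"
  shows "integrable lebesgue (\<lambda>x. indicator A x * lam x)"
proof -
  obtain \<Lambda> where \<Lambda>: "0 \<le> \<Lambda>" "\<And>x. x \<in> I0 \<Longrightarrow> lam x \<le> \<Lambda>"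
    using lam_bounded by blast
  show ?thesis
  proof (rule Bochner_Integration.integrable_bound)
    show "integrable lebesgue (\<lambda>x. \<Lambda> * indicator I0 x)"
      using emeasure_I0_finite by (intro integrable_mult_right integrable_real_indicator) auto
    show "AE x in lebesgue. norm (indicator A x * lam x) \<le> norm (\<Lambda> * indicator I0 x)"
      using assms lam_nonneg \<Lambda> by (auto simp: indicator_def)
  qed (use assms in measurable)
qed

lemma mass_mono:
  assumes "A \<in> sets lebesgue" "A' \<in> sets lebesgue" "A \<subseteq> A'" "A' \<subseteq> I0"
  shows "mass A \<le> mass A'"
  using assms by (intro integral_mono integrable_mass) (auto simp: indicator_def lam_nonneg subset_iff)

lemma mass_fiber: "mass (fiber k n) = mass (par p k n)"
  using integral_indicator_fiber_cong[of lam k n] by simp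

lemma exceptional_subset: "exceptional \<subseteq> I0"
  unfolding exceptional_def by auto

lemma exceptional_sets [measurable]: "exceptional \<in> sets lebesgue"
proof -
  have "exceptional = I0 \<inter> (\<Union>J\<in>Lambda p. J \<inter> {x. lam x < cmod (Psi J) / mu J})"
    unfolding exceptional_def P_maximal_def less_SUP_iff by auto
  also have "\<dots> \<in> sets lebesgue"
  proof (rule sets.Int[OF I0_sets], rule sets.countable_UN''[OF countable_Lambda])
    fix J assume "J \<in> Lambda p"
    then obtain k n where "J = par p k n" by (rule Lambda_cases)
    moreover have "{x. lam x < cmod (Psi J) / mu J} \<in> sets lebesgue"
      using lam_measurable unfolding borel_measurable_iff_less by simp
    ultimately show "J \<inter> {x. lam x < cmod (Psi J) / mu J} \<in> sets lebesgue" by auto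
  qed
  finally show ?thesis .
qed

lemma mass_le_measure_mult:
  assumes "A \<in> sets lebesgue" "A \<subseteq> I0" "emeasure lebesgue A < \<infinity>" "\<And>x. x \<in> A \<Longrightarrow> lam x \<le> c"
  shows "mass A \<le> measure lebesgue A * c"
proof -
  have "mass A \<le> integral\<^sup>L lebesgue (\<lambda>x. indicator A x * c)"
    using assms by (intro integral_mono integrable_mass integrable_mult_left integrable_real_indicator)
      (auto simp: indicator_def)
  then show ?thesis by simp
qed

lemma measure_mult_le_mass:
  assumes "A \<in> sets lebesgue" "A \<subseteq> I0" "emeasure lebesgue A < \<infinity>" "\<And>x. x \<in> A \<Longrightarrow> c \<le> lam x"
  shows "measure lebesgue A * c \<le> mass A"
proof -
  have "integral\<^sup>L lebesgue (\<lambda>x. indicator A x * c) \<le> mass A"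
    using assms by (intro integral_mono integrable_mass integrable_mult_left integrable_real_indicator)
      (auto simp: indicator_def)
  then show ?thesis by simp
qed

lemma lam_lower_bound_on_piece:
  assumes K: "K \<in> F" and w: "w \<in> K"
  shows "\<delta> / (C * measure lebesgue I0) \<le> lam w"
proof -
  obtain k n where K_eq: "K = par p k n" using K by (rule F_cases)
  have KI0: "K \<subseteq> I0" using K Union_F by auto
  have "\<delta> \<le> mass K" using delta_le_mass[OF K] .
  also have "\<dots> \<le> measure lebesgue K * (C * lam w)"
    using K_eq KI0 emeasure_par_finite lam_ratio[OF K _ w] by (intro mass_le_measure_mult) auto
  also have "\<dots> \<le> measure lebesgue I0 * (C * lam w)"
    using KI0 emeasure_I0_finite C_pos lam_nonneg KI0 w K_eq
    by (intro mult_right_mono measure_mono_fmeasurable) (auto simp: fmeasurable_def)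
  finally show ?thesis
    using C_pos measure_I0_pos by (simp add: divide_le_eq mult.commute mult.left_commute)
qed

lemma mass_cell_le:
  assumes "K \<in> F" "par p k n \<subseteq> K" "y \<in> K"
  shows "mass (par p k n) \<le> cell_vol k * (C * lam y)"
proof -
  have "mass (par p k n) \<le> measure lebesgue (par p k n) * (C * lam y)"
    using assms Union_F lam_ratio[OF assms(1) _ assms(3)]
    by (intro mass_le_measure_mult emeasure_par_finite) auto
  then show ?thesis by (simp add: measure_par_lebesgue)
qed

lemma cell_vol_mult_le_mass:
  assumes "K \<in> F" "par p k n \<subseteq> K" "y \<in> K"
  shows "cell_vol k * lam y \<le> C * mass (par p k n)"
proof -
  have "measure lebesgue (par p k n) * (lam y / C) \<le> mass (par p k n)"
  proof (rule measure_mult_le_mass)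
    fix x assume "x \<in> par p k n"
    then have "lam y \<le> C * lam x" using lam_ratio[OF assms(1) assms(3)] assms(2) by blast
    then show "lam y / C \<le> lam x" using C_pos by (simp add: divide_le_eq mult.commute)
  qed (use assms Union_F emeasure_par_finite in auto)
  then show ?thesis using C_pos by (simp add: measure_par_lebesgue field_simps)
qed

lemma norm_Psi_le_if_not_exceptional:
  assumes "y \<in> I0" "y \<notin> exceptional" "y \<in> par p k n"
  shows "cmod (Psi (par p k n)) \<le> lam y * cell_vol k"
proof -
  have "ereal (cmod (Psi (par p k n)) / cell_vol k) \<le> P_maximal p Psi y"
    using Psi_ratio_le_P_maximal[OF assms(3)] .
  also have "P_maximal p Psi y \<le> ereal (lam y)"
    using assms(1,2) unfolding exceptional_def by auto
  finally show ?thesis using cell_vol_pos[of k] by (simp add: divide_le_eq)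
qed

lemma trunc_deriv_measurable [measurable]: "trunc_deriv \<in> borel_measurable lebesgue"
  using P_deriv_measurable[OF AE_P_deriv_exists] unfolding trunc_deriv_def trunc_def by measurable

lemma norm_trunc_deriv_le: "x \<in> I0 \<Longrightarrow> cmod (trunc_deriv x) \<le> lam x"
  unfolding trunc_deriv_def trunc_def using lam_nonneg by auto

lemma integrable_trunc_deriv:
  assumes "A \<in> sets lebesgue" "A \<subseteq> I0"
  shows "integrable lebesgue (\<lambda>x. indicator A x *\<^sub>R trunc_deriv x)"
  using integrable_mass[OF assms]
proof (rule Bochner_Integration.integrable_bound)
  show "AE x in lebesgue. norm (indicator A x *\<^sub>R trunc_deriv x) \<le> norm (indicator A x * lam x)"
  proof (rule AE_I2)
    fix x
    show "norm (indicator A x *\<^sub>R trunc_deriv x) \<le> norm (indicator A x * lam x)"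
      using assms norm_trunc_deriv_le[of x] lam_nonneg[of x] by (auto simp: indicator_def)
  qed
qed (use assms in measurable)

lemma norm_integral_trunc_deriv_le:
  assumes "A \<in> sets lebesgue" "A \<subseteq> I0"
  shows "cmod (integral\<^sup>L lebesgue (\<lambda>x. indicator A x *\<^sub>R trunc_deriv x)) \<le> mass A"
proof -
  have "cmod (integral\<^sup>L lebesgue (\<lambda>x. indicator A x *\<^sub>R trunc_deriv x))
      \<le> integral\<^sup>L lebesgue (\<lambda>x. norm (indicator A x *\<^sub>R trunc_deriv x))"
    by (rule integral_norm_bound)
  also have "\<dots> \<le> mass A"
    using assms norm_trunc_deriv_le
    by (intro integral_mono integrable_norm integrable_trunc_deriv integrable_mass)
      (auto simp: indicator_def)
  finally show ?thesis .
qed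

lemma mem_exceptional_if_P_deriv_large:
  assumes "P_deriv_exists p Psi x" "x \<in> I0" "lam x < cmod (P_deriv p Psi x)"
  shows "x \<in> exceptional"
proof -
  have "(\<lambda>k. cmod (cell_avg Psi k x)) \<longlonglongrightarrow> cmod (P_deriv p Psi x)"
    using tendsto_norm[OF cell_avg_tendsto_P_deriv[OF assms(1)]] .
  from order_tendstoD(1)[OF this assms(3)]
  obtain k where "lam x < cmod (cell_avg Psi k x)" by (auto simp: eventually_sequentially)
  then have "ereal (lam x) < ereal (cmod (cell_avg Psi k x))" by simp
  also have "\<dots> \<le> P_maximal p Psi x" by (rule cell_avg_le_P_maximal)
  finally have "ereal (lam x) < P_maximal p Psi x" .
  then show ?thesis using assms(2) unfolding exceptional_def by simp
qed

end

locale stopping_setting = maximal_setting p Psi I0 lam F C \<delta>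
  for p :: "'n::finite \<Rightarrow> nat \<Rightarrow> nat" and Psi I0 lam F C \<delta> +
  fixes B :: nat and r :: nat and nI :: "'n \<Rightarrow> int"
  assumes p_le_B: "\<And>j i. 1 \<le> i \<Longrightarrow> p j i \<le> B"
    and cell_subset_I0: "par p r nI \<subseteq> I0"
    and mass_exceptional_lt_delta: "mass exceptional < \<delta>"
    and mass_exceptional_lt: "mass exceptional < cell_vol r * \<delta> / (C * measure lebesgue I0)"
begin

definition exceptional_cell :: "nat \<Rightarrow> ('n \<Rightarrow> int) \<Rightarrow> bool" where
  "exceptional_cell k n \<longleftrightarrow> par p k n \<subseteq> exceptional"

definition stops :: "nat \<Rightarrow> ('n \<Rightarrow> int) \<Rightarrow> bool" where
  "stops k n \<longleftrightarrow> (\<exists>K\<in>F. par p k n \<subseteq> K) \<and>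
                   (\<exists>c\<in>subcells p k (Suc k) n. exceptional_cell (Suc k) c)"

definition unstopped :: "nat \<Rightarrow> real^'n \<Rightarrow> bool" where
  "unstopped k x \<longleftrightarrow> (\<forall>k'. r \<le> k' \<and> k' < k \<longrightarrow> \<not> stops k' (cell_index p k' x))"

definition stopping_cells :: "nat \<Rightarrow> (nat \<times> ('n \<Rightarrow> int)) set" where
  "stopping_cells k = {(k', n'). r \<le> k' \<and> k' < k \<and> n' \<in> subcells p r k' nI \<and> stops k' n' \<and>
            (\<forall>k''. r \<le> k'' \<and> k'' < k' \<longrightarrow> \<not> stops k'' (ancestor p k'' k' n'))}"

definition exceptional_child :: "nat \<times> ('n \<Rightarrow> int) \<Rightarrow> ('n \<Rightarrow> int)" where
  "exceptional_child S =
     (SOME c. c \<in> subcells p (fst S) (Suc (fst S)) (snd S) \<and> exceptional_cell (Suc (fst S)) c)"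

lemma subcell_subset_I0: "r \<le> k \<Longrightarrow> n \<in> subcells p r k nI \<Longrightarrow> par p k n \<subseteq> I0"
  using subcell_subset cell_subset_I0 by blast

lemma fiber_subset_I0: "r \<le> k \<Longrightarrow> n \<in> subcells p r k nI \<Longrightarrow> fiber k n \<subseteq> I0"
  using subcell_subset_I0 fiber_subset_par by blast

lemma piece_containing:
  assumes "P_irrational p z" "z \<in> I0"
  obtains s where "par p s (cell_index p s z) \<in> F"
proof -
  obtain K where K: "K \<in> F" "z \<in> K" using assms(2) Union_F by auto
  moreover obtain s n where "K = par p s n" using K(1) by (rule F_cases)
  ultimately show ?thesis using that cell_index_eq_if_P_irrational[OF assms(1)] by blast
qed

lemma piece_not_subset_exceptional:
  assumes "K \<in> F"
  shows "\<not> K \<subseteq> exceptional"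
proof
  assume "K \<subseteq> exceptional"
  then have "mass K \<le> mass exceptional"
    using assms exceptional_subset by (intro mass_mono) (auto elim: F_cases)
  then show False using delta_le_mass[OF assms] mass_exceptional_lt_delta by linarith
qed

lemma initial_cell_not_subset_exceptional:
  assumes "K \<in> F" "par p r nI \<subseteq> K"
  shows "\<not> par p r nI \<subseteq> exceptional"
proof
  assume exc: "par p r nI \<subseteq> exceptional"
  have low: "\<delta> / (C * measure lebesgue I0) \<le> lam w" if "w \<in> par p r nI" for w
    using lam_lower_bound_on_piece assms that by blast
  have "cell_vol r * (\<delta> / (C * measure lebesgue I0)) \<le> mass (par p r nI)"
    using measure_mult_le_mass[OF _ cell_subset_I0 emeasure_par_finite low] measure_par_lebesgue by simp
  also have "\<dots> \<le> mass exceptional"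
    using exc exceptional_subset by (intro mass_mono) auto
  finally show False using mass_exceptional_lt by simp
qed

text \<open>Before its first stop a cell cannot lie in the exceptional set: otherwise either its partition
  piece or the initial cell would, or its parent would have stopped.\<close>

lemma not_exceptional_cell_before_stopping:
  assumes rk: "r \<le> k" and n: "n \<in> subcells p r k nI"
    and no_stop: "\<forall>k'. r \<le> k' \<and> k' < k \<longrightarrow> \<not> stops k' (ancestor p k' k n)"
  shows "\<not> exceptional_cell k n"
proof
  assume exc: "exceptional_cell k n"
  obtain z where z: "P_irrational p z" "cell_index p k z = n" using ex_P_irrational_in_fiber by blast
  have "z \<in> I0" using subcell_subset_I0[OF rk n] mem_par_cell_index z(2) by blast
  with z(1) obtain s where s: "par p s (cell_index p s z) \<in> F" by (rule piece_containing)
  consider "k \<le> s" | "k = r" "s < k" | "r < k" "s < k" using rk by linarith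
  then show False
  proof cases
    case 1
    then have "par p s (cell_index p s z) \<subseteq> exceptional"
      using par_cell_index_mono[of k s z] exc z(2) unfolding exceptional_cell_def by blast
    then show False using piece_not_subset_exceptional[OF s] by blast
  next
    case 2
    then have "n = nI" using n subcells_self by simp
    then show False
      using initial_cell_not_subset_exceptional[OF s] par_cell_index_mono[of s r z] 2 z(2) exc
      unfolding exceptional_cell_def by auto
  next
    case 3
    then obtain k' where k': "k = Suc k'" "r \<le> k'" "s \<le> k'" by (cases k) auto
    have "ancestor p k' k n = cell_index p k' z" using ancestor_cell_index[of k' k z] z(2) k' by simp
    moreover have "par p k' (cell_index p k' z) \<subseteq> par p s (cell_index p s z)"
      using par_cell_index_mono[OF k'(3)] .
    moreover have "n \<in> subcells p k' (Suc k') (cell_index p k' z)"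
      using cell_index_in_subcells_iff[of k' "Suc k'" z] z(2) k'(1) by simp
    ultimately have "stops k' (ancestor p k' k n)"
      unfolding stops_def using s exc k'(1) by auto
    then show False using no_stop k' by auto
  qed
qed

lemma unstopped_cell_avg_bound:
  assumes rk: "r \<le> k" and x: "cell_index p r x = nI" and unst: "unstopped k x"
  obtains y where "y \<in> par p k (cell_index p k x)" "y \<in> I0" "y \<notin> exceptional"
    "cmod (cell_avg Psi k x) \<le> lam y"
proof -
  have n: "cell_index p k x \<in> subcells p r k nI" using cell_index_in_subcells_iff[OF rk] x by simp
  have "\<not> exceptional_cell k (cell_index p k x)"
    using unst ancestor_cell_index
    by (intro not_exceptional_cell_before_stopping[OF rk n]) (auto simp: unstopped_def)
  then obtain y where y: "y \<in> par p k (cell_index p k x)" "y \<notin> exceptional"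
    unfolding exceptional_cell_def by auto
  have "y \<in> I0" using subcell_subset_I0[OF rk n] y(1) by auto
  with y have "cmod (Psi (par p k (cell_index p k x))) \<le> lam y * cell_vol k"
    by (intro norm_Psi_le_if_not_exceptional)
  then have "cmod (cell_avg Psi k x) \<le> lam y"
    unfolding cell_avg_def using cell_vol_pos[of k] by (simp add: norm_divide divide_le_eq)
  with y \<open>y \<in> I0\<close> show ?thesis using that by blast
qed

lemma stopping_cellsD:
  "S \<in> stopping_cells k \<Longrightarrow> r \<le> fst S \<and> fst S < k \<and> snd S \<in> subcells p r (fst S) nI"
  unfolding stopping_cells_def by auto

lemma finite_stopping_cells: "finite (stopping_cells k)"
proof (rule finite_subset)
  show "stopping_cells k \<subseteq> Sigma {r..<k} (\<lambda>k'. subcells p r k' nI)"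
    unfolding stopping_cells_def by auto
  show "finite (Sigma {r..<k} (\<lambda>k'. subcells p r k' nI))"
    using finite_subcells by (intro finite_SigmaI) auto
qed

text \<open>A point lies in the fiber of at most one stopping cell: the earlier one would be a stopped
  ancestor of the later one.\<close>

lemma stopping_cells_unique:
  assumes S1: "(a, n1) \<in> stopping_cells k1" and S2: "(b, n2) \<in> stopping_cells k2"
    and x: "cell_index p a x = n1" "cell_index p b x = n2"
  shows "a = b \<and> n1 = n2"
proof -
  have False if "(a, n1) \<in> stopping_cells k1" "(b, n2) \<in> stopping_cells k2"
      "cell_index p a x = n1" "cell_index p b x = n2" "a < b" for a b n1 n2 k1 k2
  proof -
    have "r \<le> a" "stops a n1" using that(1) unfolding stopping_cells_def by auto
    moreover have "\<not> stops a (ancestor p a b n2)"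
      using that(2,5) \<open>r \<le> a\<close> unfolding stopping_cells_def by auto
    moreover have "ancestor p a b n2 = n1" using ancestor_cell_index[of a b x] that by simp
    ultimately show False by simp
  qed
  then show ?thesis using S1 S2 x by (cases a b rule: linorder_cases) blast+
qed

lemma exceptional_child:
  assumes "S \<in> stopping_cells k"
  shows "exceptional_child S \<in> subcells p (fst S) (Suc (fst S)) (snd S)"
    and "exceptional_cell (Suc (fst S)) (exceptional_child S)"
proof -
  have "\<exists>c. c \<in> subcells p (fst S) (Suc (fst S)) (snd S) \<and> exceptional_cell (Suc (fst S)) c"
    using assms unfolding stopping_cells_def stops_def by auto
  from someI_ex[OF this] show "exceptional_child S \<in> subcells p (fst S) (Suc (fst S)) (snd S)"
    and "exceptional_cell (Suc (fst S)) (exceptional_child S)"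
    unfolding exceptional_child_def by auto
qed

lemma first_stop:
  assumes "cell_index p r x = nI" "\<not> unstopped k x"
  obtains k0 where "(k0, cell_index p k0 x) \<in> stopping_cells k"
proof -
  have "\<exists>k'. r \<le> k' \<and> k' < k \<and> stops k' (cell_index p k' x)"
    using assms(2) unfolding unstopped_def by auto
  then obtain k0 where k0: "r \<le> k0 \<and> k0 < k \<and> stops k0 (cell_index p k0 x)"
    and first: "\<And>m. m < k0 \<Longrightarrow> \<not> (r \<le> m \<and> m < k \<and> stops m (cell_index p m x))"
    unfolding exists_least_iff[of "\<lambda>k'. r \<le> k' \<and> k' < k \<and> stops k' (cell_index p k' x)"] by blast
  have "(k0, cell_index p k0 x) \<in> stopping_cells k"
    unfolding stopping_cells_def
    using k0 first assms(1) cell_index_in_subcells_iff[of r k0 x nI] ancestor_cell_index[of _ k0 x] by auto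
  then show ?thesis by (rule that)
qed

lemma sum_indicator_stopping_fibers_le_1:
  "(\<Sum>S\<in>stopping_cells k. indicator (fiber (fst S) (snd S)) x :: real) \<le> 1"
proof (cases "\<exists>S0\<in>stopping_cells k. cell_index p (fst S0) x = snd S0")
  case False
  then have "(\<Sum>S\<in>stopping_cells k. indicator (fiber (fst S) (snd S)) x :: real) = 0"
    by (intro sum.neutral) (auto simp: indicator_def)
  then show ?thesis by simp
next
  case True
  then obtain a0 n0 where S0: "(a0, n0) \<in> stopping_cells k" "cell_index p a0 x = n0" by auto
  have "indicator (fiber (fst S) (snd S)) x = (0::real)"
    if S: "S \<in> stopping_cells k" "S \<noteq> (a0, n0)" for S
  proof -
    obtain a n where S_eq: "S = (a, n)" by (cases S)
    have "cell_index p a x \<noteq> n"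
      using stopping_cells_unique[of a n k a0 n0 k x] S S0 S_eq by blast
    then show ?thesis using S_eq by (simp add: indicator_def)
  qed
  then show ?thesis
    using sum_eq_single[OF finite_stopping_cells S0(1), of "\<lambda>S. indicator (fiber (fst S) (snd S)) x :: real"]
    by simp
qed

lemma indicator_fiber_decomp:
  assumes "r \<le> k"
  shows "indicator (fiber r nI) x
       = (if unstopped k x then indicator (fiber r nI) x else 0)
         + (\<Sum>S\<in>stopping_cells k. indicator (fiber (fst S) (snd S)) x :: real)"
proof (cases "cell_index p r x = nI \<and> \<not> unstopped k x")
  case False
  have "cell_index p (fst S) x \<noteq> snd S" if "S \<in> stopping_cells k" for S
  proof
    assume "cell_index p (fst S) x = snd S"
    moreover have "r \<le> fst S" "fst S < k" "snd S \<in> subcells p r (fst S) nI" "stops (fst S) (snd S)"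
      using that unfolding stopping_cells_def by auto
    ultimately show False
      using False cell_index_in_subcells_iff[of r "fst S" x nI] unfolding unstopped_def by auto
  qed
  then have "(\<Sum>S\<in>stopping_cells k. indicator (fiber (fst S) (snd S)) x :: real) = 0"
    by (intro sum.neutral) (auto simp: indicator_def)
  then show ?thesis using False by (auto simp: indicator_def)
next
  case True
  then obtain k0 where S0: "(k0, cell_index p k0 x) \<in> stopping_cells k"
    using first_stop by blast
  have "1 \<le> (\<Sum>S\<in>stopping_cells k. indicator (fiber (fst S) (snd S)) x :: real)"
    using member_le_sum[OF S0, of "\<lambda>S. indicator (fiber (fst S) (snd S)) x :: real"] finite_stopping_cells
    by simp
  then show ?thesis using True sum_indicator_stopping_fibers_le_1 by (simp add: antisym)
qed

text \<open>A stopping cell lies in a partition piece, on which lam varies by at most the factor C,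
  and it has an exceptional child whose volume is comparable to its own (the p_j i are bounded);
  so both its Psi-value and its mass are controlled by the mass of that child.\<close>

lemma stopping_cell_bound:
  assumes S: "(a, n) \<in> stopping_cells k"
  shows "cmod (Psi (par p a n)) + mass (par p a n)
           \<le> (C + C * C) * real B ^ CARD('n) * mass (par p (Suc a) (exceptional_child (a, n)))"
proof -
  define c where "c = exceptional_child (a, n)"
  define D where "D = real B ^ CARD('n)"
  have ra: "r \<le> a" and n: "n \<in> subcells p r a nI"
    and first: "\<forall>k'. r \<le> k' \<and> k' < a \<longrightarrow> \<not> stops k' (ancestor p k' a n)" and st: "stops a n"
    using S unfolding stopping_cells_def by auto
  obtain y where y: "y \<in> par p a n" "y \<notin> exceptional"
    using not_exceptional_cell_before_stopping[OF ra n first] unfolding exceptional_cell_def by auto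
  have "y \<in> I0" using subcell_subset_I0[OF ra n] y by auto
  obtain K where K: "K \<in> F" "par p a n \<subseteq> K" using st unfolding stops_def by auto
  have child: "par p (Suc a) c \<subseteq> par p a n"
    using subcell_subset exceptional_child(1)[OF S] unfolding c_def by simp
  define X where "X = mass (par p (Suc a) c)"
  have Psi_le: "cmod (Psi (par p a n)) \<le> lam y * cell_vol a"
    using norm_Psi_le_if_not_exceptional \<open>y \<in> I0\<close> y by blast
  have mass_le: "mass (par p a n) \<le> cell_vol a * (C * lam y)"
    using mass_cell_le K y(1) by blast
  have vol_le: "cell_vol a \<le> D * cell_vol (Suc a)"
    unfolding D_def using cell_vol_Suc_le p_le_B by blast
  have child_le: "cell_vol (Suc a) * lam y \<le> C * X"
    unfolding X_def using cell_vol_mult_le_mass K y(1) child by blast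
  have "0 \<le> lam y" "0 \<le> D" using lam_nonneg \<open>y \<in> I0\<close> D_def by auto
  have "lam y * cell_vol a \<le> lam y * (D * cell_vol (Suc a))"
    using vol_le \<open>0 \<le> lam y\<close> by (rule mult_left_mono)
  also have "\<dots> = D * (cell_vol (Suc a) * lam y)" by simp
  also have "\<dots> \<le> D * (C * X)" using child_le \<open>0 \<le> D\<close> by (rule mult_left_mono)
  finally have main: "lam y * cell_vol a \<le> D * (C * X)" .
  have "cmod (Psi (par p a n)) + mass (par p a n) \<le> (1 + C) * (lam y * cell_vol a)"
    using Psi_le mass_le by (simp add: algebra_simps)
  also have "\<dots> \<le> (1 + C) * (D * (C * X))"
    using main C_pos by (intro mult_left_mono) auto
  finally show ?thesis unfolding X_def D_def c_def by (simp add: algebra_simps)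
qed

lemma sum_indicator_exceptional_children_le:
  "(\<Sum>S\<in>stopping_cells k. indicator (fiber (Suc (fst S)) (exceptional_child S)) x :: real)
     \<le> indicator exceptional x"
proof (cases "x \<in> exceptional")
  case True
  have "indicator (fiber (Suc (fst S)) (exceptional_child S)) x \<le> (indicator (fiber (fst S) (snd S)) x :: real)"
    if "S \<in> stopping_cells k" for S
    using exceptional_child(1)[OF that] cell_index_in_subcells_iff[of "fst S" "Suc (fst S)" x "snd S"]
    by (auto simp: indicator_def)
  then have "(\<Sum>S\<in>stopping_cells k. indicator (fiber (Suc (fst S)) (exceptional_child S)) x :: real)
      \<le> (\<Sum>S\<in>stopping_cells k. indicator (fiber (fst S) (snd S)) x)"
    by (rule sum_mono)
  also have "\<dots> \<le> 1" by (rule sum_indicator_stopping_fibers_le_1)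
  finally show ?thesis using True by simp
next
  case False
  have "x \<notin> fiber (Suc (fst S)) (exceptional_child S)" if "S \<in> stopping_cells k" for S
    using False exceptional_child(2)[OF that] fiber_subset_par unfolding exceptional_cell_def by blast
  then have "(\<Sum>S\<in>stopping_cells k. indicator (fiber (Suc (fst S)) (exceptional_child S)) x :: real) = 0"
    by (intro sum.neutral) (auto simp: indicator_def)
  then show ?thesis by simp
qed

lemma sum_mass_exceptional_children_le:
  "(\<Sum>S\<in>stopping_cells k. mass (par p (Suc (fst S)) (exceptional_child S))) \<le> mass exceptional"
proof -
  let ?child = "\<lambda>S. fiber (Suc (fst S)) (exceptional_child S)"
  have child_I0: "?child S \<subseteq> I0" if "S \<in> stopping_cells k" for S
  proof -
    have "par p (Suc (fst S)) (exceptional_child S) \<subseteq> par p (fst S) (snd S)"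
      by (rule subcell_subset[OF _ exceptional_child(1)[OF that]]) simp
    also have "\<dots> \<subseteq> I0" using stopping_cellsD[OF that] subcell_subset_I0 by blast
    finally show ?thesis using fiber_subset_par by blast
  qed
  have int: "integrable lebesgue (\<lambda>x. indicator (?child S) x * lam x)" if "S \<in> stopping_cells k" for S
    using child_I0[OF that] by (intro integrable_mass) auto
  have "(\<Sum>S\<in>stopping_cells k. mass (par p (Suc (fst S)) (exceptional_child S)))
      = (\<Sum>S\<in>stopping_cells k. mass (?child S))"
    by (simp add: mass_fiber)
  also have "\<dots> = integral\<^sup>L lebesgue (\<lambda>x. \<Sum>S\<in>stopping_cells k. indicator (?child S) x * lam x)"
    using int by (rule Bochner_Integration.integral_sum[symmetric])
  also have "\<dots> \<le> mass exceptional"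
  proof (intro integral_mono integrable_mass exceptional_sets exceptional_subset)
    show "integrable lebesgue (\<lambda>x. \<Sum>S\<in>stopping_cells k. indicator (?child S) x * lam x)"
      using int by (rule Bochner_Integration.integrable_sum)
    fix x
    let ?s = "\<Sum>S\<in>stopping_cells k. indicator (?child S) x :: real"
    have le: "?s \<le> indicator exceptional x" by (rule sum_indicator_exceptional_children_le)
    have "(\<Sum>S\<in>stopping_cells k. indicator (?child S) x * lam x) = ?s * lam x"
      by (simp add: sum_distrib_right)
    also have "\<dots> \<le> indicator exceptional x * lam x"
    proof (cases "x \<in> exceptional")
      case True
      then have "0 \<le> lam x" using exceptional_subset lam_nonneg by auto
      with le show ?thesis by (rule mult_right_mono)
    next
      case False
      then have "?s = 0" using le by (simp add: sum_nonneg antisym)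
      then show ?thesis using False by simp
    qed
    finally show "(\<Sum>S\<in>stopping_cells k. indicator (?child S) x * lam x) \<le> indicator exceptional x * lam x" .
  qed
  finally show ?thesis .
qed

lemma integral_fiber_decomp:
  fixes f :: "real^'n \<Rightarrow> complex"
  assumes "r \<le> k" and int: "integrable lebesgue (\<lambda>x. indicator (fiber r nI) x *\<^sub>R f x)"
    and int_S: "\<And>S. S \<in> stopping_cells k \<Longrightarrow> integrable lebesgue (\<lambda>x. indicator (fiber (fst S) (snd S)) x *\<^sub>R f x)"
  shows "integral\<^sup>L lebesgue (\<lambda>x. indicator (fiber r nI) x *\<^sub>R f x)
       = integral\<^sup>L lebesgue (\<lambda>x. (if unstopped k x then indicator (fiber r nI) x else 0) *\<^sub>R f x)
         + (\<Sum>S\<in>stopping_cells k. integral\<^sup>L lebesgue (\<lambda>x. indicator (fiber (fst S) (snd S)) x *\<^sub>R f x))"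
proof -
  let ?stopped = "\<lambda>x. \<Sum>S\<in>stopping_cells k. indicator (fiber (fst S) (snd S)) x *\<^sub>R f x"
  have eq: "(if unstopped k x then indicator (fiber r nI) x else 0) *\<^sub>R f x
      = indicator (fiber r nI) x *\<^sub>R f x - ?stopped x" for x
    using arg_cong[OF indicator_fiber_decomp[OF \<open>r \<le> k\<close>, of x], of "\<lambda>t. t *\<^sub>R f x"]
    by (simp add: scaleR_add_left scaleR_sum_left)
  have int_stopped: "integrable lebesgue ?stopped"
    using int_S by (rule Bochner_Integration.integrable_sum)
  have "integral\<^sup>L lebesgue (\<lambda>x. (if unstopped k x then indicator (fiber r nI) x else 0) *\<^sub>R f x)
      = integral\<^sup>L lebesgue (\<lambda>x. indicator (fiber r nI) x *\<^sub>R f x) - integral\<^sup>L lebesgue ?stopped"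
    unfolding eq using int int_stopped by (rule Bochner_Integration.integral_diff)
  moreover have "integral\<^sup>L lebesgue ?stopped
      = (\<Sum>S\<in>stopping_cells k. integral\<^sup>L lebesgue (\<lambda>x. indicator (fiber (fst S) (snd S)) x *\<^sub>R f x))"
    using int_S by (rule Bochner_Integration.integral_sum)
  ultimately show ?thesis by simp
qed

definition level_defect :: "nat \<Rightarrow> real^'n \<Rightarrow> complex" where
  "level_defect k x =
     (if unstopped k x then indicator (fiber r nI) x else 0) *\<^sub>R (cell_avg Psi k x - trunc_deriv x)"

definition limit_defect :: "real^'n \<Rightarrow> complex" where
  "limit_defect x =
     (if \<forall>k. unstopped k x then indicator (fiber r nI) x else 0) *\<^sub>R (P_deriv p Psi x - trunc_deriv x)"

lemma
  assumes "r \<le> a" "a \<le> k" "n \<in> subcells p r a nI"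
  shows integrable_fiber_cell_avg_minus_trunc_deriv:
      "integrable lebesgue (\<lambda>x. indicator (fiber a n) x *\<^sub>R (cell_avg Psi k x - trunc_deriv x))"
    and integral_fiber_cell_avg_minus_trunc_deriv:
      "integral\<^sup>L lebesgue (\<lambda>x. indicator (fiber a n) x *\<^sub>R (cell_avg Psi k x - trunc_deriv x))
       = Psi (par p a n) - integral\<^sup>L lebesgue (\<lambda>x. indicator (fiber a n) x *\<^sub>R trunc_deriv x)"
proof -
  have int_avg: "integrable lebesgue (\<lambda>x. indicator (fiber a n) x *\<^sub>R cell_avg Psi k x)"
    using integrable_fiber_cell_avg[OF additive \<open>a \<le> k\<close>] .
  have int_trunc: "integrable lebesgue (\<lambda>x. indicator (fiber a n) x *\<^sub>R trunc_deriv x)"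
    using fiber_subset_I0[OF assms(1,3)] by (intro integrable_trunc_deriv) auto
  show "integrable lebesgue (\<lambda>x. indicator (fiber a n) x *\<^sub>R (cell_avg Psi k x - trunc_deriv x))"
    using Bochner_Integration.integrable_diff[OF int_avg int_trunc] by (simp add: scaleR_diff_right)
  show "integral\<^sup>L lebesgue (\<lambda>x. indicator (fiber a n) x *\<^sub>R (cell_avg Psi k x - trunc_deriv x))
       = Psi (par p a n) - integral\<^sup>L lebesgue (\<lambda>x. indicator (fiber a n) x *\<^sub>R trunc_deriv x)"
    using Bochner_Integration.integral_diff[OF int_avg int_trunc]
      integral_fiber_cell_avg[OF additive \<open>a \<le> k\<close>] by (simp add: scaleR_diff_right)
qed

lemma sum_stopped_error_le:
  "(\<Sum>S\<in>stopping_cells k. cmod (Psi (par p (fst S) (snd S))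
        - integral\<^sup>L lebesgue (\<lambda>x. indicator (fiber (fst S) (snd S)) x *\<^sub>R trunc_deriv x)))
     \<le> (C + C * C) * real B ^ CARD('n) * mass exceptional"
proof -
  let ?T = "\<lambda>a n. integral\<^sup>L lebesgue (\<lambda>x. indicator (fiber a n) x *\<^sub>R trunc_deriv x)"
  let ?K = "(C + C * C) * real B ^ CARD('n)"
  have "(\<Sum>S\<in>stopping_cells k. cmod (Psi (par p (fst S) (snd S)) - ?T (fst S) (snd S)))
      \<le> (\<Sum>S\<in>stopping_cells k. ?K * mass (par p (Suc (fst S)) (exceptional_child S)))"
  proof (rule sum_mono)
    fix S assume S: "S \<in> stopping_cells k"
    then have "cmod (?T (fst S) (snd S)) \<le> mass (par p (fst S) (snd S))"
      using stopping_cellsD[OF S] norm_integral_trunc_deriv_le[OF _ fiber_subset_I0]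
      by (simp add: mass_fiber)
    then have "cmod (Psi (par p (fst S) (snd S)) - ?T (fst S) (snd S))
        \<le> cmod (Psi (par p (fst S) (snd S))) + mass (par p (fst S) (snd S))"
      by (meson add_left_mono norm_triangle_ineq4 order.trans)
    also have "\<dots> \<le> ?K * mass (par p (Suc (fst S)) (exceptional_child S))"
      using stopping_cell_bound[of "fst S" "snd S" k] S by simp
    finally show "cmod (Psi (par p (fst S) (snd S)) - ?T (fst S) (snd S))
        \<le> ?K * mass (par p (Suc (fst S)) (exceptional_child S))" .
  qed
  also have "\<dots> \<le> ?K * mass exceptional"
    using sum_mass_exceptional_children_le C_pos by (simp add: sum_distrib_left[symmetric] mult_left_mono)
  finally show ?thesis .
qed

lemma norm_Psi_minus_integral_le_at_level:
  assumes "r \<le> k"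
  shows "cmod (Psi (par p r nI) - integral\<^sup>L lebesgue (\<lambda>x. indicator (fiber r nI) x *\<^sub>R trunc_deriv x))
     \<le> cmod (integral\<^sup>L lebesgue (level_defect k)) + (C + C * C) * real B ^ CARD('n) * mass exceptional"
proof -
  let ?f = "\<lambda>x. cell_avg Psi k x - trunc_deriv x"
  let ?T = "\<lambda>a n. integral\<^sup>L lebesgue (\<lambda>x. indicator (fiber a n) x *\<^sub>R trunc_deriv x)"
  let ?E = "\<Sum>S\<in>stopping_cells k. Psi (par p (fst S) (snd S)) - ?T (fst S) (snd S)"
  have S: "r \<le> fst S" "fst S \<le> k" "snd S \<in> subcells p r (fst S) nI" if "S \<in> stopping_cells k" for S
    using stopping_cellsD[OF that] by auto
  have nI: "nI \<in> subcells p r r nI" by (simp add: subcells_self)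
  have "Psi (par p r nI) - ?T r nI = integral\<^sup>L lebesgue (\<lambda>x. indicator (fiber r nI) x *\<^sub>R ?f x)"
    using integral_fiber_cell_avg_minus_trunc_deriv[OF order_refl assms nI] by simp
  also have "\<dots> = integral\<^sup>L lebesgue (level_defect k)
      + (\<Sum>S\<in>stopping_cells k. integral\<^sup>L lebesgue (\<lambda>x. indicator (fiber (fst S) (snd S)) x *\<^sub>R ?f x))"
    unfolding level_defect_def[abs_def]
    by (rule integral_fiber_decomp[OF assms integrable_fiber_cell_avg_minus_trunc_deriv[OF order_refl assms nI]])
      (rule integrable_fiber_cell_avg_minus_trunc_deriv[OF S])
  also have "(\<Sum>S\<in>stopping_cells k. integral\<^sup>L lebesgue (\<lambda>x. indicator (fiber (fst S) (snd S)) x *\<^sub>R ?f x)) = ?E"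
    by (intro sum.cong refl integral_fiber_cell_avg_minus_trunc_deriv[OF S])
  finally have "cmod (Psi (par p r nI) - ?T r nI) \<le> cmod (integral\<^sup>L lebesgue (level_defect k)) + cmod ?E"
    by (simp add: norm_triangle_ineq)
  also have "cmod ?E \<le> (\<Sum>S\<in>stopping_cells k. cmod (Psi (par p (fst S) (snd S)) - ?T (fst S) (snd S)))"
    by (rule norm_sum)
  finally show ?thesis using sum_stopped_error_le[of k] by linarith
qed

lemma unstopped_measurable [measurable]: "Measurable.pred lebesgue (unstopped k)"
proof -
  have "Measurable.pred lebesgue (\<lambda>x. stops k' (cell_index p k' x))" for k'
    using measurable_compose[OF cell_index_measurable, of "stops k'" "count_space UNIV"]
    by (simp add: pred_def comp_def)
  then show ?thesis unfolding unstopped_def by measurable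
qed

lemma unstopped_mono: "unstopped k x \<Longrightarrow> k0 \<le> k \<Longrightarrow> unstopped k0 x"
  unfolding unstopped_def by auto

text \<open>A point that is never stopped sees, from the level of its partition piece on, only cells
  that are not exceptional and lie in that piece, so its cell averages are bounded by C lam x.\<close>

lemma norm_P_deriv_le_if_never_stopped:
  assumes "P_deriv_exists p Psi x" "P_irrational p x"
    and x: "cell_index p r x = nI" and unst: "\<forall>k. unstopped k x"
  shows "cmod (P_deriv p Psi x) \<le> C * lam x"
proof -
  have "x \<in> I0" using x cell_subset_I0 mem_par_cell_index by blast
  with assms(2) obtain s where s: "par p s (cell_index p s x) \<in> F" by (rule piece_containing)
  have "cmod (cell_avg Psi k x) \<le> C * lam x" if "max s r \<le> k" for k
  proof -
    have "r \<le> k" using that by simp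
    then obtain y where y: "y \<in> par p k (cell_index p k x)" "cmod (cell_avg Psi k x) \<le> lam y"
      using unstopped_cell_avg_bound[OF _ x unst[rule_format]] by blast
    have "y \<in> par p s (cell_index p s x)" using par_cell_index_mono[of s k x] that y(1) by auto
    then have "lam y \<le> C * lam x" using lam_ratio[OF s] mem_par_cell_index by blast
    then show ?thesis using y(2) by simp
  qed
  then show ?thesis
    using tendsto_norm[OF cell_avg_tendsto_P_deriv[OF assms(1)]] by (intro LIMSEQ_le_const2) (auto intro: exI[of _ "max s r"])
qed

lemma norm_limit_defect_le:
  assumes "P_deriv_exists p Psi x" "P_irrational p x"
  shows "cmod (limit_defect x) \<le> C * (indicator exceptional x * lam x)"
proof (cases "(\<forall>k. unstopped k x) \<and> cell_index p r x = nI \<and> lam x < cmod (P_deriv p Psi x)")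
  case True
  then have "x \<in> I0" using cell_subset_I0 mem_par_cell_index by blast
  then have "x \<in> exceptional" using mem_exceptional_if_P_deriv_large assms True by blast
  then show ?thesis
    using True norm_P_deriv_le_if_never_stopped[OF assms] by (simp add: limit_defect_def trunc_deriv_def trunc_def)
next
  case False
  have "0 \<le> C * (indicator exceptional x * lam x)"
    using exceptional_subset lam_nonneg C_pos by (auto simp: indicator_def)
  then show ?thesis using False by (auto simp: limit_defect_def trunc_deriv_def trunc_def)
qed

lemma level_defect_measurable [measurable]: "level_defect k \<in> borel_measurable lebesgue"
  unfolding level_defect_def by measurable

lemma limit_defect_measurable [measurable]: "limit_defect \<in> borel_measurable lebesgue"
  unfolding limit_defect_def using P_deriv_measurable[OF AE_P_deriv_exists] by measurable

lemma AE_level_defect_tendsto: "AE x in lebesgue. (\<lambda>k. level_defect k x) \<longlonglongrightarrow> limit_defect x"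
  using AE_P_deriv_exists
proof (rule AE_mp, intro AE_I2 impI)
  fix x assume "P_deriv_exists p Psi x"
  show "(\<lambda>k. level_defect k x) \<longlonglongrightarrow> limit_defect x"
  proof (cases "\<forall>k. unstopped k x")
    case True
    then show ?thesis
      unfolding level_defect_def limit_defect_def
      using cell_avg_tendsto_P_deriv[OF \<open>P_deriv_exists p Psi x\<close>] by (auto intro!: tendsto_intros)
  next
    case False
    then obtain k0 where "\<not> unstopped k0 x" by blast
    then have "\<forall>k\<ge>k0. level_defect k x = limit_defect x"
      using unstopped_mono False unfolding level_defect_def limit_defect_def by auto
    then show ?thesis by (intro tendsto_eventually) (auto simp: eventually_sequentially)
  qed
qed

lemma level_defect_bounded:
  obtains W where "W \<ge> 0" "\<And>k x. r \<le> k \<Longrightarrow> cmod (level_defect k x) \<le> W * indicator (par p r nI) x"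
proof -
  obtain \<Lambda> where \<Lambda>: "0 \<le> \<Lambda>" "\<And>x. x \<in> I0 \<Longrightarrow> lam x \<le> \<Lambda>" using lam_bounded by blast
  have "cmod (level_defect k x) \<le> 2 * \<Lambda> * indicator (par p r nI) x" if rk: "r \<le> k" for k x
  proof (cases "unstopped k x \<and> cell_index p r x = nI")
    case True
    then obtain y where "y \<in> I0" "cmod (cell_avg Psi k x) \<le> lam y"
      using unstopped_cell_avg_bound[OF rk] by metis
    moreover have x: "x \<in> par p r nI" using True mem_par_cell_index by blast
    then have "cmod (trunc_deriv x) \<le> \<Lambda>"
      using cell_subset_I0 norm_trunc_deriv_le \<Lambda>(2) by (meson order.trans subsetD)
    ultimately have "cmod (cell_avg Psi k x - trunc_deriv x) \<le> 2 * \<Lambda>"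
      using \<Lambda>(2) norm_triangle_ineq4[of "cell_avg Psi k x" "trunc_deriv x"] by fastforce
    then show ?thesis using True x by (simp add: level_defect_def)
  qed (use \<Lambda>(1) in \<open>auto simp: level_defect_def indicator_def\<close>)
  then show ?thesis using that[of "2 * \<Lambda>"] \<Lambda>(1) by auto
qed

lemma
  shows integrable_limit_defect: "integrable lebesgue limit_defect"
    and integral_level_defect_tendsto:
      "(\<lambda>k. integral\<^sup>L lebesgue (level_defect (k + r))) \<longlonglongrightarrow> integral\<^sup>L lebesgue limit_defect"
proof -
  obtain W where W: "W \<ge> 0" "\<And>k x. r \<le> k \<Longrightarrow> cmod (level_defect k x) \<le> W * indicator (par p r nI) x"
    using level_defect_bounded by blast
  have int_W: "integrable lebesgue (\<lambda>x. W * indicator (par p r nI) x)"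
    using emeasure_par_finite by (intro integrable_mult_right integrable_real_indicator) auto
  have lim: "AE x in lebesgue. (\<lambda>k. level_defect (k + r) x) \<longlonglongrightarrow> limit_defect x"
    using AE_level_defect_tendsto by (rule AE_mp) (auto intro: LIMSEQ_ignore_initial_segment)
  have bound: "\<And>k. AE x in lebesgue. norm (level_defect (k + r) x) \<le> W * indicator (par p r nI) x"
    using W(2) by auto
  show "integrable lebesgue limit_defect"
    by (rule integrable_dominated_convergence[OF _ _ int_W lim bound]) measurable
  show "(\<lambda>k. integral\<^sup>L lebesgue (level_defect (k + r))) \<longlonglongrightarrow> integral\<^sup>L lebesgue limit_defect"
    by (rule integral_dominated_convergence[OF _ _ int_W lim bound]) measurable
qed

lemma norm_integral_limit_defect_le: "cmod (integral\<^sup>L lebesgue limit_defect) \<le> C * mass exceptional"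
proof -
  have "cmod (integral\<^sup>L lebesgue limit_defect) \<le> integral\<^sup>L lebesgue (\<lambda>x. cmod (limit_defect x))"
    by (rule integral_norm_bound)
  also have "\<dots> \<le> integral\<^sup>L lebesgue (\<lambda>x. C * (indicator exceptional x * lam x))"
  proof (rule integral_mono_AE)
    show "AE x in lebesgue. cmod (limit_defect x) \<le> C * (indicator exceptional x * lam x)"
      using AE_conjI[OF AE_P_deriv_exists AE_P_irrational]
      by (rule AE_mp) (auto intro: norm_limit_defect_le)
  qed (use integrable_limit_defect integrable_mass[OF exceptional_sets exceptional_subset] in auto)
  finally show ?thesis by simp
qed

theorem norm_Psi_minus_integral_trunc_deriv_le:
  "cmod (Psi (par p r nI) - integral\<^sup>L lebesgue (\<lambda>x. indicator (par p r nI) x *\<^sub>R trunc_deriv x))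
     \<le> ((C + C * C) * real B ^ CARD('n) + C) * mass exceptional"
proof -
  let ?K = "(C + C * C) * real B ^ CARD('n)"
  have "cmod (Psi (par p r nI) - integral\<^sup>L lebesgue (\<lambda>x. indicator (fiber r nI) x *\<^sub>R trunc_deriv x))
      \<le> cmod (integral\<^sup>L lebesgue limit_defect) + ?K * mass exceptional"
    using norm_Psi_minus_integral_le_at_level[of "k + r" for k]
    by (intro LIMSEQ_le_const[OF tendsto_add[OF tendsto_norm[OF integral_level_defect_tendsto] tendsto_const]])
      auto
  also have "\<dots> \<le> (?K + C) * mass exceptional"
    using norm_integral_limit_defect_le by (simp add: algebra_simps)
  finally show ?thesis by (simp add: integral_indicator_fiber_cong)
qed

end

lemma truncated_integral_error_le:
  fixes p :: "'n::finite \<Rightarrow> nat \<Rightarrow> nat" and g :: "real^'n \<Rightarrow> real"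
  assumes "pary_grid p" and p_le_B: "\<And>j i. 1 \<le> i \<Longrightarrow> p j i \<le> B"
    and additive: "additive_on_Lambda p Psi" and deriv: "AE x in lebesgue. P_deriv_exists p Psi x"
    and I0: "I0 \<in> Lambda p" and I: "I \<in> Lambda p" "I \<subseteq> I0"
    and g_measurable: "g \<in> borel_measurable (restrict_space lebesgue I0)"
    and g_nonneg: "\<And>x. x \<in> I0 \<Longrightarrow> 0 \<le> g x"
    and C: "0 < C" and F: "finite F" "F \<subseteq> Lambda p" "\<Union>F = I0"
    and ratio: "\<forall>J\<in>F. \<forall>x\<in>J. \<forall>y\<in>J. g x \<le> C * g y"
    and delta: "\<forall>J\<in>F. \<delta> \<le> (LINT x:J|lebesgue. g x)"
    and small: "(LINT x:{x\<in>I0. P_maximal p Psi x > ereal (g x)}|lebesgue. g x)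
                  < min \<delta> (measure lebesgue I * \<delta> / (C * measure lebesgue I0))"
  shows "cmod (Psi I - (LINT x:I|lebesgue. trunc (P_deriv p Psi x) (g x)))
           \<le> ((C + C * C) * real B ^ CARD('n) + C) *
              (LINT x:{x\<in>I0. P_maximal p Psi x > ereal (g x)}|lebesgue. g x)"
proof -
  interpret pary_grid p by fact
  obtain r nI where I_eq: "I = par p r nI" using I(1) by (rule Lambda_cases)
  define lam where "lam x = indicator I0 x * g x" for x
  have lam_eq: "x \<in> I0 \<Longrightarrow> lam x = g x" for x by (simp add: lam_def)
  have "I0 \<in> sets lebesgue" using I0 by (auto elim!: Lambda_cases)
  then have "lam \<in> borel_measurable lebesgue"
    using g_measurable borel_measurable_restrict_space_iff[of I0 lebesgue g] by (simp add: lam_def[abs_def])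
  moreover have mass_eq: "integral\<^sup>L lebesgue (\<lambda>x. indicator A x * lam x) = (LINT x:A|lebesgue. g x)"
    if "A \<subseteq> I0" for A
    unfolding set_lebesgue_integral_def using that
    by (intro Bochner_Integration.integral_cong) (auto simp: indicator_def lam_def)
  ultimately interpret maximal_setting p Psi I0 lam F C \<delta>
  proof unfold_locales
    show "lam x \<le> C * lam y" if "K \<in> F" "x \<in> K" "y \<in> K" for K x y
    proof -
      have "x \<in> I0" "y \<in> I0" using that F(3) by auto
      then show ?thesis using that ratio lam_eq by simp
    qed
    show "\<delta> \<le> integral\<^sup>L lebesgue (\<lambda>x. indicator K x * lam x)" if "K \<in> F" for K
    proof -
      have "K \<subseteq> I0" using that F(3) by auto
      then show ?thesis using that delta mass_eq[of K] by simp
    qed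
  qed (use additive deriv I0 g_nonneg C F lam_eq in auto)
  have exceptional_eq: "exceptional = {x\<in>I0. P_maximal p Psi x > ereal (g x)}"
    unfolding exceptional_def using lam_eq by auto
  interpret stopping_setting p Psi I0 lam F C \<delta> B r nI
    using p_le_B I(2) small measure_par_lebesgue[of r nI]
    by unfold_locales (simp_all add: I_eq exceptional_eq mass_eq)
  have "(LINT x:I|lebesgue. trunc (P_deriv p Psi x) (g x))
      = integral\<^sup>L lebesgue (\<lambda>x. indicator (par p r nI) x *\<^sub>R trunc_deriv x)"
    unfolding set_lebesgue_integral_def trunc_deriv_def I_eq using I(2) lam_eq
    by (intro Bochner_Integration.integral_cong) (auto simp: I_eq indicator_def)
  then show ?thesis
    using norm_Psi_minus_integral_trunc_deriv_le by (simp add: I_eq exceptional_eq mass_eq)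
qed

lemma tendsto_if_error_controlled:
  fixes a :: "nat \<Rightarrow> 'a::real_normed_vector"
  assumes "e \<longlonglongrightarrow> 0" "0 < \<epsilon>" "\<And>m. e m < \<epsilon> \<Longrightarrow> norm (a m - L) \<le> K * e m"
  shows "a \<longlonglongrightarrow> L"
proof (rule LIM_zero_cancel[OF Lim_null_comparison])
  show "eventually (\<lambda>m. norm (a m - L) \<le> K * e m) sequentially"
    using order_tendstoD(2)[OF assms(1,2)] by eventually_elim (rule assms(3))
  show "(\<lambda>m. K * e m) \<longlonglongrightarrow> 0"
    using tendsto_mult_right_zero[OF assms(1)] .
qed

theorem theorem3:
  fixes p :: "'n::finite \<Rightarrow> nat \<Rightarrow> nat"
    and Psi :: "(real^'n) set \<Rightarrow> complex"
    and I0 :: "(real^'n) set"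
    and h :: "nat \<Rightarrow> real^'n \<Rightarrow> real"
  assumes p_ne1: "\<And>j i. i \<ge> 1 \<Longrightarrow> p j i \<ge> 1 \<and> p j i \<noteq> 1"
    and p_bdd: "\<exists>B. \<forall>j. \<forall>i\<ge>1. p j i \<le> B"
    and add: "additive_on_Lambda p Psi"
    and I0: "I0 \<in> Lambda p"
    and h_meas: "\<And>m. h m \<in> borel_measurable (restrict_space lebesgue I0)"
    and h_nonneg: "\<And>x. x \<in> I0 \<Longrightarrow> 0 \<le> h 0 x"
    and h_mono: "\<And>m x. x \<in> I0 \<Longrightarrow> h m x \<le> h (Suc m) x"
    and h_inf: "\<And>x. x \<in> I0 \<Longrightarrow> filterlim (\<lambda>m. h m x) at_top sequentially"
    and partitions: "\<exists>C>0. \<exists>F :: nat \<Rightarrow> (real^'n) set set.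
        (\<forall>m. finite (F m) \<and> F m \<subseteq> Lambda p \<and> \<Union>(F m) = I0 \<and>
             pairwise (\<lambda>A B. interior A \<inter> interior B = {}) (F m) \<and>
             (\<forall>J\<in>F m. \<forall>x\<in>J. \<forall>y\<in>J. h m x \<le> C * h m y)) \<and>
        (\<exists>\<delta>>0. \<forall>m. \<forall>J\<in>F m. \<delta> \<le> (LINT x:J|lebesgue. h m x))"
    and maximal: "(\<lambda>m. LINT x:{x\<in>I0. P_maximal p Psi x > ereal (h m x)}|lebesgue. h m x)
                    \<longlonglongrightarrow> 0"
    and deriv_ae: "AE x in lebesgue. P_deriv_exists p Psi x"
  shows "\<forall>I\<in>Lambda p. I \<subseteq> I0 \<longrightarrow>
           (\<lambda>m. LINT x:I|lebesgue. trunc (P_deriv p Psi x) (h m x)) \<longlonglongrightarrow> Psi I"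
proof (intro ballI impI)
  fix I assume I: "I \<in> Lambda p" "I \<subseteq> I0"
  have grid: "pary_grid p"
    using p_ne1 by unfold_locales (metis One_nat_def Suc_1 Suc_leI le_neq_implies_less)
  obtain B where B: "\<And>j i. 1 \<le> i \<Longrightarrow> p j i \<le> B" using p_bdd by blast
  obtain C F \<delta> where C: "0 < C" and \<delta>: "0 < \<delta>"
    and F: "\<And>m. finite (F m) \<and> F m \<subseteq> Lambda p \<and> \<Union>(F m) = I0 \<and>
                 pairwise (\<lambda>A B. interior A \<inter> interior B = {}) (F m) \<and>
                 (\<forall>J\<in>F m. \<forall>x\<in>J. \<forall>y\<in>J. h m x \<le> C * h m y)"
    and F_mass: "\<And>m. \<forall>J\<in>F m. \<delta> \<le> (LINT x:J|lebesgue. h m x)"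
    using partitions by (elim exE conjE) blast
  have h_nonneg_all: "0 \<le> h m x" if "x \<in> I0" for m x
    using h_nonneg[OF that] lift_Suc_mono_le[of "\<lambda>m. h m x", OF h_mono[OF that]] by (meson le0 order.trans)
  show "(\<lambda>m. LINT x:I|lebesgue. trunc (P_deriv p Psi x) (h m x)) \<longlonglongrightarrow> Psi I"
  proof (rule tendsto_if_error_controlled[OF maximal])
    show "0 < min \<delta> (measure lebesgue I * \<delta> / (C * measure lebesgue I0))"
      using \<delta> C pary_grid.measure_Lambda_pos[OF grid] I(1) I0 by simp
    fix m
    have Fm: "finite (F m)" "F m \<subseteq> Lambda p" "\<Union>(F m) = I0" "\<forall>J\<in>F m. \<forall>x\<in>J. \<forall>y\<in>J. h m x \<le> C * h m y"
      using F[of m] by auto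
    assume "(LINT x:{x\<in>I0. P_maximal p Psi x > ereal (h m x)}|lebesgue. h m x)
        < min \<delta> (measure lebesgue I * \<delta> / (C * measure lebesgue I0))"
    from truncated_integral_error_le[OF grid B add deriv_ae I0 I h_meas h_nonneg_all C Fm F_mass this]
    show "norm ((LINT x:I|lebesgue. trunc (P_deriv p Psi x) (h m x)) - Psi I)
        \<le> ((C + C * C) * real B ^ CARD('n) + C) *
           (LINT x:{x\<in>I0. P_maximal p Psi x > ereal (h m x)}|lebesgue. h m x)"
      by (simp add: norm_minus_commute)
  qed
qed

end
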